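(* The rectangle locus for two pairs of lines in the plane is a hyperbola if and only if neither pair consists of parallel lines, at most one pair consists of orthogonal lines, and the pairs are not translations of each other.
   Context: A pair of lines means two distinct lines; two pairs of lines are distinct pairs, possibly sharing one line. The rectangle locus of two pairs $L_1,L_3$ and $L_2,L_4$ is the set of points $p$ in the plane that are the midpoint both of a segment joining $L_1$ and $L_3$ and of a segment joining $L_2$ and $L_4$, these two segments having equal length (equivalently, centers of possibly degenerate rectangles whose diagonals join the lines of the respective pairs). Here a hyperbola means a set $\{{\bf x}\in\mathbb{R}^2:({\bf x}-{\bf p})^TC({\bf x}-{\bf p})=k\}$ with $C$ a real symmetric $2\times2$ matrix with $\det C<0$, ${\bf p}\in\mathbb{R}^2$, $k\in\mathbb{R}$; the case $k=0$ (a pair of crossing lines) is a degenerate hyperbola and is allowed. One pair is a translation of the other if it is its image under a translation of the plane. *)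

theory Defs
  imports "HOL-Analysis.Analysis"
begin

type_synonym point = "real^2"

definition line_through :: "point \<Rightarrow> point \<Rightarrow> point set" where
  "line_through p d = {p + t *\<^sub>R d | t. True}"

definition is_line :: "point set \<Rightarrow> bool" where
  "is_line L \<longleftrightarrow> (\<exists>p d. d \<noteq> 0 \<and> L = line_through p d)"

definition parallel_lines :: "point set \<Rightarrow> point set \<Rightarrow> bool" where
  "parallel_lines L M \<longleftrightarrow>
     (\<exists>p q d. d \<noteq> 0 \<and> L = line_through p d \<and> M = line_through q d)"

definition orthogonal_lines :: "point set \<Rightarrow> point set \<Rightarrow> bool" where
  "orthogonal_lines L M \<longleftrightarrow>
     (\<exists>p q d e. d \<noteq> 0 \<and> e \<noteq> 0 \<and> d \<bullet> e = 0 \<and>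
        L = line_through p d \<and> M = line_through q e)"

definition rectangle_locus ::
  "point set \<Rightarrow> point set \<Rightarrow> point set \<Rightarrow> point set \<Rightarrow> point set" where
  "rectangle_locus L1 L3 L2 L4 =
     {x. \<exists>a\<in>L1. \<exists>c\<in>L3. \<exists>b\<in>L2. \<exists>d\<in>L4.
           midpoint a c = x \<and> midpoint b d = x \<and> dist a c = dist b d}"

text \<open>Hyperbola (possibly degenerate, k = 0 allowed).\<close>
definition is_hyperbola :: "point set \<Rightarrow> bool" where
  "is_hyperbola S \<longleftrightarrow>
     (\<exists>(C::real^2^2) (p::point) (k::real).
        transpose C = C \<and> det C < 0 \<and>
        S = {x. (x - p) \<bullet> (C *v (x - p)) = k})"

definition pair_translate :: "point set \<Rightarrow> point set \<Rightarrow> point set \<Rightarrow> point set \<Rightarrow> bool" where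
  "pair_translate L1 L3 L2 L4 \<longleftrightarrow>
     (\<exists>v::point. {(\<lambda>x. x + v) ` L1, (\<lambda>x. x + v) ` L3} = {L2, L4})"

end

theory Submission
  imports Defs
begin

(* Put each pair of lines through its intersection point: L1, L3 through P with directions d1, d3,
   and L2, L4 through Q with directions d2, d4. If a = P + s d and c = P + t e, then the midpoint x
   satisfies 2 (x - P) = s d + t e, while the diagonal a - c = s d - t e is the image of 2 (x - P)
   under the oblique reflection fixing d and reversing e. Hence the rectangle locus is
   {x. |R (x - P)| = |S (x - Q)|} for two such reflections R and S, the zero set of a quadratic
   function with quadratic part R^T R - S^T S. For matrices with trace 0 and determinant -1 the
   determinant of R^T R - S^T S is minus a sum of two squares; it vanishes exactly when R and S are
   both symmetric (both pairs orthogonal) or S = R or S = -R (one pair is a translate of the other),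
   and then the quadratic part vanishes, so the locus is a line, the plane or empty. A hyperbola is
   none of these, nor is it contained in a line, which is where the locus of a parallel pair lies. *)

section \<open>Planar vectors\<close>

lemma vec2_eq_iff: "(x::'a^2) = y \<longleftrightarrow> x$1 = y$1 \<and> x$2 = y$2"
  by (simp add: vec_eq_iff forall_2)

lemma inner_vec2: "(x::real^2) \<bullet> y = x$1 * y$1 + x$2 * y$2"
  by (simp add: inner_vec_def sum_2)

definition cross2 :: "real^2 \<Rightarrow> real^2 \<Rightarrow> real" where
  "cross2 a b = a$1 * b$2 - a$2 * b$1"

lemma cross2_swap: "cross2 b a = - cross2 a b"
  by (simp add: cross2_def)

lemma cross2_eq_0_commute: "cross2 b a = 0 \<longleftrightarrow> cross2 a b = 0"
  using cross2_swap[of b a] by simp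

lemma cross2_nonzero_imp_nonzero:
  assumes "cross2 d e \<noteq> 0"
  shows "d \<noteq> 0" "e \<noteq> 0"
  using assms by (auto simp: cross2_def)

lemma scaleR_cancel_imp_eq:
  fixes x y :: "'a::real_vector"
  assumes "b \<noteq> 0" "b *\<^sub>R x = a *\<^sub>R y"
  shows "x = (a / b) *\<^sub>R y"
proof -
  have "x = (1 / b) *\<^sub>R (b *\<^sub>R x)" using assms(1) by simp
  also have "\<dots> = (a / b) *\<^sub>R y" using assms(2) by simp
  finally show ?thesis .
qed

lemma cross2_eq_0_iff:
  assumes "d \<noteq> 0"
  shows "cross2 d e = 0 \<longleftrightarrow> (\<exists>c. e = c *\<^sub>R d)"
proof
  assume "cross2 d e = 0"
  then have "(d \<bullet> d) *\<^sub>R e = (d \<bullet> e) *\<^sub>R d"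
    unfolding vec2_eq_iff inner_vec2 cross2_def by (simp add: algebra_simps)
  then have "e = ((d \<bullet> e) / (d \<bullet> d)) *\<^sub>R d"
    using assms by (intro scaleR_cancel_imp_eq) simp_all
  then show "\<exists>c. e = c *\<^sub>R d" ..
qed (auto simp: cross2_def)

lemma cramer2:
  assumes "cross2 d e \<noteq> 0"
  shows "y = (cross2 y e / cross2 d e) *\<^sub>R d + (cross2 d y / cross2 d e) *\<^sub>R e"
proof -
  have "cross2 d e *\<^sub>R y = 1 *\<^sub>R (cross2 y e *\<^sub>R d + cross2 d y *\<^sub>R e)"
    unfolding vec2_eq_iff cross2_def by (simp add: algebra_simps)
  from scaleR_cancel_imp_eq[OF assms this] show ?thesis
    by (simp add: scaleR_add_right)
qed

lemma orthogonal_to_basis_eq_0: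
  assumes "w \<bullet> a = 0" "w \<bullet> b = 0" "cross2 a b \<noteq> 0"
  shows "w = 0"
proof -
  have "w \<bullet> w = 0"
    by (subst (2) cramer2[OF assms(3), of w]) (simp add: inner_add_right assms(1,2))
  then show ?thesis by simp
qed

section \<open>Quadratic forms and hyperbolas\<close>

lemmas matrix2_simps = vec2_eq_iff transpose_def matrix_matrix_mult_def mat_def sum_2 det_2 trace_def

lemma transpose_eq_self_2: "transpose (A::'a^2^2) = A \<longleftrightarrow> A$1$2 = A$2$1"
  by (auto simp: vec2_eq_iff transpose_def)

lemma matrix_vector_mult_uminus: "(- A) *v x = - (A *v (x::real^'n))"
  by (simp add: matrix_vector_mult_def vec_eq_iff sum_negf)

lemma inner_matrix_vector_vec2:
  "(x::real^2) \<bullet> ((C::real^2^2) *v y)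
    = C$1$1 * x$1 * y$1 + C$1$2 * x$1 * y$2 + C$2$1 * x$2 * y$1 + C$2$2 * x$2 * y$2"
  by (simp add: inner_vec2 matrix_vector_mult_def sum_2 algebra_simps)

lemma symmetric_matrix_inner_commute:
  assumes "transpose C = C"
  shows "x \<bullet> (C *v y) = (C *v x) \<bullet> (y::real^'n)"
proof -
  have "x v* C = C *v x"
    using vector_transpose_matrix[of x C] assms by simp
  then show ?thesis by (simp flip: dot_lmul_matrix)
qed

lemma quadratic_form_lincomb:
  fixes C :: "real^'n^'n"
  assumes "transpose C = C"
  shows "(s *\<^sub>R a + t *\<^sub>R b) \<bullet> (C *v (s *\<^sub>R a + t *\<^sub>R b))
    = s\<^sup>2 * (a \<bullet> (C *v a)) + 2 * s * t * (a \<bullet> (C *v b)) + t\<^sup>2 * (b \<bullet> (C *v b))"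
proof -
  have "b \<bullet> (C *v a) = a \<bullet> (C *v b)"
    using symmetric_matrix_inner_commute[OF assms, of b a] by (simp add: inner_commute)
  then show ?thesis
    by (simp add: power2_eq_square algebra_simps)
qed

lemma quadratic_form_shift:
  fixes G :: "real^'n^'n"
  assumes "transpose G = G"
  shows "(x - p) \<bullet> (G *v (x - p)) = x \<bullet> (G *v x) - 2 * ((G *v p) \<bullet> x) + p \<bullet> (G *v p)"
proof -
  have "x \<bullet> (G *v p) = (G *v p) \<bullet> x" by (rule inner_commute)
  moreover have "p \<bullet> (G *v x) = (G *v p) \<bullet> x" by (rule symmetric_matrix_inner_commute[OF assms])
  ultimately show ?thesis
    by (simp add: matrix_vector_mult_diff_distrib inner_diff_left inner_diff_right)
qed

lemma norm_matrix_vector_power2: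
  fixes A :: "real^'n^'m"
  shows "(norm (A *v y))\<^sup>2 = y \<bullet> ((transpose A ** A) *v y)"
proof -
  have "(A *v y) \<bullet> (A *v y) = ((A *v y) v* A) \<bullet> y" by (simp add: dot_lmul_matrix)
  also have "\<dots> = y \<bullet> ((transpose A ** A) *v y)"
    by (simp flip: matrix_vector_mul_assoc add: inner_commute)
  finally show ?thesis by (simp add: power2_norm_eq_inner)
qed

lemma isotropic_basis:
  fixes C :: "real^2^2"
  assumes "transpose C = C" "det C < 0"
  obtains a b where "a \<bullet> (C *v a) = 0" "b \<bullet> (C *v b) = 0" "a \<bullet> (C *v b) \<noteq> 0" "cross2 a b \<noteq> 0"
proof -
  have sym: "C$2$1 = C$1$2"
    using assms(1) by (simp add: transpose_eq_self_2)
  define \<alpha> \<beta> \<gamma> where "\<alpha> = C$1$1" and "\<beta> = C$1$2" and "\<gamma> = C$2$2"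
  have neg: "\<alpha> * \<gamma> < \<beta>\<^sup>2"
    using assms(2) sym by (simp add: det_2 \<alpha>_def \<beta>_def \<gamma>_def power2_eq_square)
  have form: "x \<bullet> (C *v y) = \<alpha> * x$1 * y$1 + \<beta> * (x$1 * y$2 + x$2 * y$1) + \<gamma> * x$2 * y$2"
    for x y :: "real^2"
    by (simp add: inner_matrix_vector_vec2 sym \<alpha>_def \<beta>_def \<gamma>_def algebra_simps)
  show ?thesis
  proof (cases "\<alpha> = 0")
    case True
    then have "\<beta> \<noteq> 0" using neg by auto
    show ?thesis
      by (rule that[of "vector [1, 0]" "vector [\<gamma>, -2 * \<beta>]"])
        (use True \<open>\<beta> \<noteq> 0\<close> in \<open>simp_all add: form cross2_def power2_eq_square algebra_simps\<close>)
  next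
    case False
    define r where "r = sqrt (\<beta>\<^sup>2 - \<alpha> * \<gamma>)"
    have r2: "r\<^sup>2 = \<beta>\<^sup>2 - \<alpha> * \<gamma>" and "r > 0"
      using neg by (simp_all add: r_def)
    show ?thesis
    proof (rule that[of "vector [r - \<beta>, \<alpha>]" "vector [- r - \<beta>, \<alpha>]"])
      show "vector [r - \<beta>, \<alpha>] \<bullet> (C *v vector [r - \<beta>, \<alpha>]) = 0"
        "vector [- r - \<beta>, \<alpha>] \<bullet> (C *v vector [- r - \<beta>, \<alpha>]) = 0"
        using r2 by (simp_all add: form) algebra+
      have "vector [r - \<beta>, \<alpha>] \<bullet> (C *v vector [- r - \<beta>, \<alpha>]) = - 2 * \<alpha> * r\<^sup>2"
        using r2 by (simp add: form) algebra
      then show "vector [r - \<beta>, \<alpha>] \<bullet> (C *v vector [- r - \<beta>, \<alpha>]) \<noteq> 0"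
        using False \<open>r > 0\<close> by simp
      show "cross2 (vector [r - \<beta>, \<alpha>]) (vector [- r - \<beta>, \<alpha>]) \<noteq> 0"
        using False \<open>r > 0\<close> by (simp add: cross2_def algebra_simps)
    qed
  qed
qed

lemma hyperbola_asymptotic_coordinates:
  assumes "is_hyperbola S"
  obtains a b p m where "cross2 a b \<noteq> 0" "\<And>s t. p + s *\<^sub>R a + t *\<^sub>R b \<in> S \<longleftrightarrow> s * t = m"
proof -
  obtain C p k where sym: "transpose C = C" and det: "det C < 0"
    and S: "S = {x. (x - p) \<bullet> (C *v (x - p)) = k}"
    using assms unfolding is_hyperbola_def by blast
  obtain a b where a: "a \<bullet> (C *v a) = 0" and b: "b \<bullet> (C *v b) = 0"
    and ab: "a \<bullet> (C *v b) \<noteq> 0" and "cross2 a b \<noteq> 0"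
    using isotropic_basis[OF sym det] .
  have "p + s *\<^sub>R a + t *\<^sub>R b \<in> S \<longleftrightarrow> s * t = k / (2 * (a \<bullet> (C *v b)))" for s t
    using quadratic_form_lincomb[OF sym, of s a t b] ab
    by (simp add: S a b field_simps)
  with \<open>cross2 a b \<noteq> 0\<close> show ?thesis by (rule that)
qed

lemma hyperbola_subset_line:
  assumes "is_hyperbola S" "S \<subseteq> {x. w \<bullet> x = c}"
  shows "w = 0 \<and> c = 0"
proof -
  obtain a b p m where ab: "cross2 a b \<noteq> 0"
    and S: "\<And>s t. p + s *\<^sub>R a + t *\<^sub>R b \<in> S \<longleftrightarrow> s * t = m"
    using hyperbola_asymptotic_coordinates[OF assms(1)] by metis
  have on_line: "w \<bullet> p + s * (w \<bullet> a) + t * (w \<bullet> b) = c" if "s * t = m" for s t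
    using assms(2) S[of s t] that by (auto simp: inner_add_right)
  have "w \<bullet> p + w \<bullet> a + m * (w \<bullet> b) = c" "w \<bullet> p - w \<bullet> a - m * (w \<bullet> b) = c"
    using on_line[of 1 m] on_line[of "-1" "-m"] by simp_all
  then have p: "w \<bullet> p = c" and a: "w \<bullet> a + m * (w \<bullet> b) = 0"
    by linarith+
  have "w \<bullet> b = 0"
  proof (cases "m = 0")
    case True
    then show ?thesis using on_line[of 0 1] p by simp
  next
    case False
    have "2 * (w \<bullet> a) + m * (w \<bullet> b) / 2 = 0"
      using on_line[of 2 "m / 2"] p by simp
    with a have "m * (w \<bullet> b) = 0" by linarith
    with False show ?thesis by simp
  qed
  moreover from this a have "w \<bullet> a = 0" by simp
  ultimately have "w = 0" using ab by (intro orthogonal_to_basis_eq_0)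
  with p show ?thesis by simp
qed

lemma hyperbola_neq_UNIV:
  assumes "is_hyperbola S"
  shows "S \<noteq> UNIV"
proof
  assume "S = UNIV"
  obtain a b p m where "\<And>s t. p + s *\<^sub>R a + t *\<^sub>R b \<in> S \<longleftrightarrow> s * t = m"
    using hyperbola_asymptotic_coordinates[OF assms] by metis
  from this[of 0 0] this[of 1 1] \<open>S = UNIV\<close> show False by simp
qed

lemma affine_zero_set_not_hyperbola: "\<not> is_hyperbola {x::real^2. b \<bullet> x + c = 0}"
proof
  assume hyp: "is_hyperbola {x::real^2. b \<bullet> x + c = 0}"
  moreover have "{x::real^2. b \<bullet> x + c = 0} \<subseteq> {x. b \<bullet> x = - c}" by auto
  ultimately have "b = 0 \<and> - c = 0" by (rule hyperbola_subset_line)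
  then have "{x::real^2. b \<bullet> x + c = 0} = UNIV" by simp
  with hyperbola_neq_UNIV[OF hyp] show False by blast
qed

lemma quadric_is_hyperbola:
  assumes "transpose A = A" "det A < 0"
  shows "is_hyperbola {x. x \<bullet> (A *v x) + b \<bullet> x + c = 0}"
proof -
  have "invertible A"
    using assms(2) by (simp add: invertible_det_nz)
  then obtain B where "A ** B = mat 1"
    by (auto simp: invertible_right_inverse)
  define p where "p = B *v (- (1/2) *\<^sub>R b)"
  have p: "A *v p = - (1/2) *\<^sub>R b"
    by (simp add: p_def matrix_vector_mul_assoc \<open>A ** B = mat 1\<close>)
  have "(x - p) \<bullet> (A *v (x - p)) = x \<bullet> (A *v x) + b \<bullet> x + p \<bullet> (A *v p)" for x
    by (simp add: quadratic_form_shift[OF assms(1)] p)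
  then have "{x. x \<bullet> (A *v x) + b \<bullet> x + c = 0}
      = {x. (x - p) \<bullet> (A *v (x - p)) = p \<bullet> (A *v p) - c}"
    by auto
  with assms show ?thesis
    unfolding is_hyperbola_def by blast
qed

section \<open>Reflections of the plane\<close>

text \<open>Trace 0 and determinant -1 means characteristic polynomial \<open>\<lambda>\<^sup>2 - 1\<close>: these are the
  matrices of the (not necessarily orthogonal) reflections of the plane.\<close>

definition is_reflection :: "real^2^2 \<Rightarrow> bool" where
  "is_reflection R \<longleftrightarrow> trace R = 0 \<and> det R = -1"

lemma is_reflection_entries:
  assumes "is_reflection R"
  shows "R$2$2 = - R$1$1" "(R$1$1)\<^sup>2 + R$1$2 * R$2$1 = 1"
proof -
  show tr: "R$2$2 = - R$1$1"
    using assms by (simp add: is_reflection_def trace_def sum_2)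
  show "(R$1$1)\<^sup>2 + R$1$2 * R$2$1 = 1"
    using assms by (simp add: is_reflection_def det_2 tr power2_eq_square)
qed

lemma is_reflection_square:
  assumes "is_reflection R"
  shows "R ** R = mat 1"
  using is_reflection_entries[OF assms] by (simp add: matrix2_simps power2_eq_square algebra_simps)

lemma det_gram_diff:
  assumes "is_reflection R" "is_reflection S"
  shows "det (transpose R ** R - transpose S ** S)
    = - ((S$1$2 * R$2$1 - S$2$1 * R$1$2)\<^sup>2 + (S$1$1 * (R$1$2 - R$2$1) - R$1$1 * (S$1$2 - S$2$1))\<^sup>2)"
proof -
  note R = is_reflection_entries[OF assms(1)] and S = is_reflection_entries[OF assms(2)]
  have "det (transpose R ** R - transpose S ** S)
    = - ((S$1$2 * R$2$1 - S$2$1 * R$1$2)\<^sup>2 + (S$1$1 * (R$1$2 - R$2$1) - R$1$1 * (S$1$2 - S$2$1))\<^sup>2)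
      + ((R$1$1)\<^sup>2 + R$1$2 * R$2$1 - ((S$1$1)\<^sup>2 + S$1$2 * S$2$1))\<^sup>2"
    by (simp add: matrix2_simps R(1) S(1)) algebra
  then show ?thesis using R(2) S(2) by simp
qed

lemma reflection_pair_cases:
  assumes "is_reflection R" "is_reflection S"
    and "S$1$2 * R$2$1 = S$2$1 * R$1$2" "S$1$1 * (R$1$2 - R$2$1) = R$1$1 * (S$1$2 - S$2$1)"
  shows "(transpose R = R \<and> transpose S = S) \<or> S = R \<or> S = - R"
proof -
  define r u v r' u' v' where "r = R$1$1" "u = R$1$2" "v = R$2$1" "r' = S$1$1" "u' = S$1$2" "v' = S$2$1"
  have R: "R$2$2 = - r" "r\<^sup>2 + u * v = 1" and S: "S$2$2 = - r'" "r'\<^sup>2 + u' * v' = 1"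
    using is_reflection_entries[OF assms(1)] is_reflection_entries[OF assms(2)]
    unfolding r_u_v_r'_u'_v'_def by simp_all
  have uv: "u' * v = v' * u" and ruv: "r' * (u - v) = r * (u' - v')"
    using assms(3,4) unfolding r_u_v_r'_u'_v'_def by simp_all
  have "(u = v \<and> u' = v') \<or> (r' = r \<and> u' = u \<and> v' = v) \<or> (r' = - r \<and> u' = - u \<and> v' = - v)"
  proof (cases "u = v")
    case True
    have "r\<^sup>2 + u\<^sup>2 = 1" using R(2) True by (simp add: power2_eq_square)
    moreover have "r * (u' - v') = 0" using ruv True by (metis diff_self mult_zero_right)
    moreover have "u * (u' - v') = 0" using uv True by (simp add: algebra_simps)
    ultimately have "u' = v'" by auto
    with True show ?thesis by simp
  next
    case False
    define l where "l = (u' - v') / (u - v)"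
    have u'v': "u' - v' = l * (u - v)" using False by (simp add: l_def)
    have "(r' - l * r) * (u - v) = 0" using ruv u'v' by algebra
    then have r': "r' = l * r" using False by simp
    have "(u - v) * (l * v - v') = 0" using uv u'v' by algebra
    then have v': "v' = l * v" using False by simp
    with u'v' have u': "u' = l * u" by (simp add: algebra_simps)
    have "l\<^sup>2 * (r\<^sup>2 + u * v) = 1" using S(2) r' u' v' by (simp add: power2_eq_square algebra_simps)
    then have "l = 1 \<or> l = -1" using R(2) by (simp add: power2_eq_1_iff)
    then show ?thesis using r' u' v' by auto
  qed
  then show ?thesis
    using R(1) S(1) unfolding r_u_v_r'_u'_v'_def by (auto simp: matrix2_simps)
qed

lemma gram_eq_if_reflections:
  assumes "is_reflection R" "is_reflection S"
    and "(transpose R = R \<and> transpose S = S) \<or> S = R \<or> S = - R"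
  shows "transpose R ** R = transpose S ** S"
  using assms(3)
proof (elim disjE conjE)
  assume "transpose R = R" "transpose S = S"
  then show ?thesis using is_reflection_square assms(1,2) by simp
qed (auto simp: matrix2_simps)

lemma det_gram_diff_neg_iff:
  assumes "is_reflection R" "is_reflection S"
  shows "det (transpose R ** R - transpose S ** S) < 0
    \<longleftrightarrow> \<not> ((transpose R = R \<and> transpose S = S) \<or> S = R \<or> S = - R)"
proof -
  define X Y where "X = S$1$2 * R$2$1 - S$2$1 * R$1$2"
    and "Y = S$1$1 * (R$1$2 - R$2$1) - R$1$1 * (S$1$2 - S$2$1)"
  have "det (transpose R ** R - transpose S ** S) = - (X\<^sup>2 + Y\<^sup>2)"
    unfolding X_def Y_def by (rule det_gram_diff[OF assms])
  moreover have "X = 0 \<and> Y = 0 \<longleftrightarrow> (transpose R = R \<and> transpose S = S) \<or> S = R \<or> S = - R"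
  proof
    assume "X = 0 \<and> Y = 0"
    then show "(transpose R = R \<and> transpose S = S) \<or> S = R \<or> S = - R"
      using reflection_pair_cases[OF assms] unfolding X_def Y_def by simp
  qed (auto simp: X_def Y_def matrix2_simps algebra_simps)
  ultimately show ?thesis
    by (smt (verit) sum_power2_gt_zero_iff)
qed

lemma reflection_norm_locus_hyperbola_iff:
  assumes "is_reflection R" "is_reflection S"
  shows "is_hyperbola {x. norm (R *v (x - P)) = norm (S *v (x - Q))}
    \<longleftrightarrow> \<not> ((transpose R = R \<and> transpose S = S) \<or> S = R \<or> S = - R)"
proof -
  define G H where "G = transpose R ** R" and "H = transpose S ** S"
  have sym: "transpose G = G" "transpose H = H"
    by (simp_all add: G_def H_def matrix_transpose_mul)
  then have sym_diff: "transpose (G - H) = G - H"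
    by (simp add: transpose_def vec_eq_iff)
  define b c where "b = - 2 *\<^sub>R (G *v P - H *v Q)" and "c = P \<bullet> (G *v P) - Q \<bullet> (H *v Q)"
  have "norm (R *v (x - P)) = norm (S *v (x - Q)) \<longleftrightarrow> x \<bullet> ((G - H) *v x) + b \<bullet> x + c = 0" for x
  proof -
    have "norm (R *v (x - P)) = norm (S *v (x - Q))
      \<longleftrightarrow> (norm (R *v (x - P)))\<^sup>2 = (norm (S *v (x - Q)))\<^sup>2"
      by simp
    also have "\<dots> \<longleftrightarrow> x \<bullet> ((G - H) *v x) + b \<bullet> x + c = 0"
      unfolding norm_matrix_vector_power2 G_def[symmetric] H_def[symmetric]
        quadratic_form_shift[OF sym(1)] quadratic_form_shift[OF sym(2)]
      by (simp add: b_def c_def inner_commute algebra_simps)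
    finally show ?thesis .
  qed
  then have locus: "{x. norm (R *v (x - P)) = norm (S *v (x - Q))}
      = {x. x \<bullet> ((G - H) *v x) + b \<bullet> x + c = 0}"
    by simp
  show ?thesis
  proof (cases "(transpose R = R \<and> transpose S = S) \<or> S = R \<or> S = - R")
    case True
    then have "G - H = 0" using gram_eq_if_reflections[OF assms] by (simp add: G_def H_def)
    then show ?thesis using True affine_zero_set_not_hyperbola by (simp add: locus)
  next
    case False
    then have "det (G - H) < 0" using det_gram_diff_neg_iff[OF assms] by (simp add: G_def H_def)
    then show ?thesis using False quadric_is_hyperbola[OF sym_diff] by (simp add: locus)
  qed
qed

section \<open>The reflection fixing one direction and reversing another\<close>

text \<open>The matrix \<open>[d e] diag(1, -1) [d e]\<^sup>-\<^sup>1\<close>; a junk value when \<open>d\<close> and \<open>e\<close> are parallel.\<close>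

definition oblique_reflection :: "real^2 \<Rightarrow> real^2 \<Rightarrow> real^2^2" where
  "oblique_reflection d e = (1 / cross2 d e) *\<^sub>R
     vector [vector [d$1 * e$2 + d$2 * e$1, - 2 * d$1 * e$1],
             vector [2 * d$2 * e$2, - (d$1 * e$2 + d$2 * e$1)]]"

lemma inverse_cross2_expanded:
  assumes "cross2 d e \<noteq> 0"
  shows "inverse (cross2 d e) * (d$1 * e$2 - d$2 * e$1) = 1"
  using assms by (simp add: cross2_def)

lemma oblique_reflection_fixes:
  assumes "cross2 d e \<noteq> 0"
  shows "oblique_reflection d e *v d = d"
  using inverse_cross2_expanded[OF assms]
  by (simp add: oblique_reflection_def vec2_eq_iff matrix_vector_mult_def sum_2 divide_inverse) algebra+

lemma oblique_reflection_reverses: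
  assumes "cross2 d e \<noteq> 0"
  shows "oblique_reflection d e *v e = - e"
  using inverse_cross2_expanded[OF assms]
  by (simp add: oblique_reflection_def vec2_eq_iff matrix_vector_mult_def sum_2 divide_inverse) algebra+

lemma is_reflection_oblique_reflection:
  assumes "cross2 d e \<noteq> 0"
  shows "is_reflection (oblique_reflection d e)"
proof -
  have "trace (oblique_reflection d e) = 0"
    by (simp add: oblique_reflection_def trace_def sum_2 add_divide_distrib[symmetric])
  moreover have "det (oblique_reflection d e) = -1"
    using inverse_cross2_expanded[OF assms]
    by (simp add: oblique_reflection_def det_2 divide_inverse) algebra
  ultimately show ?thesis by (simp add: is_reflection_def)
qed

lemma oblique_reflection_lincomb:
  assumes "cross2 d e \<noteq> 0"
  shows "oblique_reflection d e *v (s *\<^sub>R d + t *\<^sub>R e) = s *\<^sub>R d - t *\<^sub>R e"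
  by (simp add: matrix_vector_right_distrib matrix_vector_mult_scaleR
      oblique_reflection_fixes[OF assms] oblique_reflection_reverses[OF assms])

lemma oblique_reflection_unique:
  assumes "cross2 d e \<noteq> 0" "A *v d = d" "A *v e = - e"
  shows "A = oblique_reflection d e"
  unfolding matrix_eq
proof
  fix y
  obtain s t where y: "y = s *\<^sub>R d + t *\<^sub>R e"
    by (rule that[OF cramer2[OF assms(1)]])
  show "A *v y = oblique_reflection d e *v y"
    by (simp add: y matrix_vector_right_distrib matrix_vector_mult_scaleR assms(2,3)
        oblique_reflection_fixes[OF assms(1)] oblique_reflection_reverses[OF assms(1)])
qed

lemma oblique_reflection_swap:
  assumes "cross2 d e \<noteq> 0"
  shows "oblique_reflection e d = - oblique_reflection d e"
proof -
  have "cross2 e d \<noteq> 0" using assms by (simp add: cross2_eq_0_commute)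
  moreover have "(- oblique_reflection d e) *v e = e" "(- oblique_reflection d e) *v d = - d"
    by (simp_all only: matrix_vector_mult_uminus oblique_reflection_fixes[OF assms]
        oblique_reflection_reverses[OF assms] minus_minus)
  ultimately have "- oblique_reflection d e = oblique_reflection e d"
    by (rule oblique_reflection_unique)
  then show ?thesis by simp
qed

lemma symmetric_oblique_reflection_iff:
  assumes "cross2 d e \<noteq> 0"
  shows "transpose (oblique_reflection d e) = oblique_reflection d e \<longleftrightarrow> d \<bullet> e = 0"
proof -
  have "transpose (oblique_reflection d e) = oblique_reflection d e
    \<longleftrightarrow> - 2 * d$1 * e$1 / cross2 d e = 2 * d$2 * e$2 / cross2 d e"
    by (simp add: transpose_eq_self_2 oblique_reflection_def)
  also have "\<dots> \<longleftrightarrow> - 2 * d$1 * e$1 = 2 * d$2 * e$2"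
    using assms by (simp only: divide_cancel_right) simp
  also have "\<dots> \<longleftrightarrow> d \<bullet> e = 0"
    by (auto simp: inner_vec2)
  finally show ?thesis .
qed

lemma oblique_reflection_fixed_imp:
  assumes "cross2 d e \<noteq> 0" "oblique_reflection d e *v y = y"
  shows "cross2 d y = 0"
proof -
  define s t where "s = cross2 y e / cross2 d e" and "t = cross2 d y / cross2 d e"
  have y: "y = s *\<^sub>R d + t *\<^sub>R e"
    unfolding s_def t_def by (rule cramer2[OF assms(1)])
  have "s *\<^sub>R d - t *\<^sub>R e = s *\<^sub>R d + t *\<^sub>R e"
    using assms(2) oblique_reflection_lincomb[OF assms(1), of s t] by (simp flip: y)
  then have "cross2 d (s *\<^sub>R d - t *\<^sub>R e) = cross2 d (s *\<^sub>R d + t *\<^sub>R e)" by (rule arg_cong)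
  then have "- t * cross2 d e = t * cross2 d e" by (simp add: cross2_def algebra_simps)
  then have "t = 0" using assms(1) by simp
  then show ?thesis using assms(1) by (simp add: t_def)
qed

lemma oblique_reflection_eq_iff:
  assumes "cross2 d e \<noteq> 0" "cross2 d' e' \<noteq> 0"
  shows "oblique_reflection d' e' = oblique_reflection d e \<longleftrightarrow> cross2 d d' = 0 \<and> cross2 e e' = 0"
proof
  assume eq: "oblique_reflection d' e' = oblique_reflection d e"
  have "cross2 e d \<noteq> 0" using assms(1) by (simp add: cross2_eq_0_commute)
  have "oblique_reflection d e *v d' = d'"
    using oblique_reflection_fixes[OF assms(2)] by (simp add: eq)
  moreover have "oblique_reflection e d *v e' = e'"
    using oblique_reflection_reverses[OF assms(2)]
    by (simp add: eq oblique_reflection_swap[OF assms(1)] matrix_vector_mult_uminus)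
  ultimately show "cross2 d d' = 0 \<and> cross2 e e' = 0"
    using oblique_reflection_fixed_imp assms(1) \<open>cross2 e d \<noteq> 0\<close> by blast
next
  assume "cross2 d d' = 0 \<and> cross2 e e' = 0"
  then obtain a b where "d' = a *\<^sub>R d" "e' = b *\<^sub>R e"
    using cross2_eq_0_iff cross2_nonzero_imp_nonzero[OF assms(1)] by blast
  then have "oblique_reflection d e *v d' = d'" "oblique_reflection d e *v e' = - e'"
    by (simp_all add: matrix_vector_mult_scaleR oblique_reflection_fixes[OF assms(1)]
        oblique_reflection_reverses[OF assms(1)])
  then show "oblique_reflection d' e' = oblique_reflection d e"
    by (intro oblique_reflection_unique[OF assms(2), symmetric])
qed

section \<open>Lines in the plane\<close>

lemma mem_line_through: "x \<in> line_through p d \<longleftrightarrow> (\<exists>t. x = p + t *\<^sub>R d)"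
  by (auto simp: line_through_def)

lemma line_through_rebase:
  assumes "q \<in> line_through p d"
  shows "line_through q d = line_through p d"
proof -
  obtain t where q: "q = p + t *\<^sub>R d"
    using assms by (auto simp: mem_line_through)
  show ?thesis
    unfolding set_eq_iff mem_line_through
  proof (intro allI iffI; elim exE)
    fix x s
    assume "x = q + s *\<^sub>R d"
    then show "\<exists>u. x = p + u *\<^sub>R d" by (intro exI[of _ "t + s"]) (simp add: q scaleR_add_left)
  next
    fix x s
    assume "x = p + s *\<^sub>R d"
    then show "\<exists>u. x = q + u *\<^sub>R d" by (intro exI[of _ "s - t"]) (simp add: q scaleR_diff_left)
  qed
qed

lemma line_through_scaleR:
  assumes "c \<noteq> 0"
  shows "line_through p (c *\<^sub>R d) = line_through p d"
  unfolding set_eq_iff mem_line_through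
proof (intro allI iffI; elim exE)
  fix x s
  assume "x = p + s *\<^sub>R c *\<^sub>R d"
  then show "\<exists>u. x = p + u *\<^sub>R d" by (intro exI[of _ "s * c"]) simp
next
  fix x s
  assume "x = p + s *\<^sub>R d"
  then show "\<exists>u. x = p + u *\<^sub>R c *\<^sub>R d" by (intro exI[of _ "s / c"]) (simp add: assms)
qed

lemma line_through_parallel_direction:
  assumes "d \<noteq> 0" "e \<noteq> 0" "cross2 d e = 0"
  shows "line_through q e = line_through q d"
proof -
  obtain c where "e = c *\<^sub>R d" using assms(1,3) cross2_eq_0_iff by blast
  with assms(2) show ?thesis by (simp add: line_through_scaleR)
qed

lemma translate_line_through: "(\<lambda>x. x + v) ` line_through p d = line_through (p + v) d"
  unfolding line_through_def by (auto simp: algebra_simps image_iff)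

lemma line_through_eq_imp_cross2_eq_0:
  assumes "line_through p d = line_through q e"
  shows "cross2 d e = 0"
proof -
  have "q \<in> line_through q e" unfolding mem_line_through by (rule exI[of _ 0]) simp
  moreover have "q + e \<in> line_through q e" unfolding mem_line_through by (rule exI[of _ 1]) simp
  ultimately obtain s t where s: "q = p + s *\<^sub>R d" and t: "q + e = p + t *\<^sub>R d"
    unfolding assms[symmetric] mem_line_through by blast
  have e: "e = (t - s) *\<^sub>R d"
    using s t by (simp add: scaleR_diff_left eq_diff_eq add.commute)
  show ?thesis unfolding e by (simp add: cross2_def algebra_simps)
qed

lemma line_through_intersect:
  assumes "cross2 d e \<noteq> 0"
  obtains x where "x \<in> line_through p d" "x \<in> line_through q e"
proof -
  define s t where "s = cross2 (q - p) e / cross2 d e" and "t = cross2 d (q - p) / cross2 d e"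
  have "q - p = s *\<^sub>R d + t *\<^sub>R e"
    unfolding s_def t_def by (rule cramer2[OF assms])
  then have "p + s *\<^sub>R d = q + (- t) *\<^sub>R e" by (simp add: algebra_simps)
  then show ?thesis
    by (intro that[of "p + s *\<^sub>R d"]) (unfold mem_line_through, blast+)
qed

lemma parallel_lines_if_cross2_eq_0:
  assumes "d \<noteq> 0" "e \<noteq> 0" "cross2 d e = 0"
  shows "parallel_lines (line_through p d) (line_through q e)"
  using assms line_through_parallel_direction[OF assms] unfolding parallel_lines_def by blast

lemma nonparallel_lines_through_common_point:
  assumes "is_line L" "is_line M" "\<not> parallel_lines L M"
  obtains P d e where "cross2 d e \<noteq> 0" "L = line_through P d" "M = line_through P e"
proof -
  obtain p d q e where "d \<noteq> 0" "e \<noteq> 0" and L: "L = line_through p d" and M: "M = line_through q e"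
    using assms(1,2) unfolding is_line_def by blast
  with assms(3) have "cross2 d e \<noteq> 0"
    using parallel_lines_if_cross2_eq_0 by blast
  moreover obtain P where "P \<in> line_through p d" "P \<in> line_through q e"
    using line_through_intersect[OF \<open>cross2 d e \<noteq> 0\<close>] by metis
  ultimately show ?thesis
    using that L M line_through_rebase by metis
qed

lemma orthogonal_line_through_iff:
  assumes "d \<noteq> 0" "e \<noteq> 0"
  shows "orthogonal_lines (line_through p d) (line_through q e) \<longleftrightarrow> d \<bullet> e = 0"
proof
  assume "orthogonal_lines (line_through p d) (line_through q e)"
  then obtain p' q' d' e' where "d' \<noteq> 0" "e' \<noteq> 0" "d' \<bullet> e' = 0"
    and "line_through p' d' = line_through p d" "line_through q' e' = line_through q e"
    unfolding orthogonal_lines_def by metis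
  then obtain a b where "d = a *\<^sub>R d'" "e = b *\<^sub>R e'"
    using line_through_eq_imp_cross2_eq_0 cross2_eq_0_iff by metis
  with \<open>d' \<bullet> e' = 0\<close> show "d \<bullet> e = 0" by simp
next
  assume "d \<bullet> e = 0"
  with assms show "orthogonal_lines (line_through p d) (line_through q e)"
    unfolding orthogonal_lines_def by blast
qed

lemma pair_translate_line_through_iff:
  assumes "d1 \<noteq> 0" "d2 \<noteq> 0" "d3 \<noteq> 0" "d4 \<noteq> 0"
  shows "pair_translate (line_through P d1) (line_through P d3) (line_through Q d2) (line_through Q d4)
    \<longleftrightarrow> (cross2 d1 d2 = 0 \<and> cross2 d3 d4 = 0) \<or> (cross2 d1 d4 = 0 \<and> cross2 d3 d2 = 0)"
proof
  assume "pair_translate (line_through P d1) (line_through P d3) (line_through Q d2) (line_through Q d4)"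
  then obtain v where
    "{line_through (P + v) d1, line_through (P + v) d3} = {line_through Q d2, line_through Q d4}"
    unfolding pair_translate_def translate_line_through by blast
  then show "(cross2 d1 d2 = 0 \<and> cross2 d3 d4 = 0) \<or> (cross2 d1 d4 = 0 \<and> cross2 d3 d2 = 0)"
    by (auto simp: doubleton_eq_iff dest: line_through_eq_imp_cross2_eq_0)
next
  assume "(cross2 d1 d2 = 0 \<and> cross2 d3 d4 = 0) \<or> (cross2 d1 d4 = 0 \<and> cross2 d3 d2 = 0)"
  then have "{line_through Q d1, line_through Q d3} = {line_through Q d2, line_through Q d4}"
    using line_through_parallel_direction assms by (auto simp: doubleton_eq_iff)
  then have "{(\<lambda>x. x + (Q - P)) ` line_through P d1, (\<lambda>x. x + (Q - P)) ` line_through P d3}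
      = {line_through Q d2, line_through Q d4}"
    by (simp add: translate_line_through)
  then show "pair_translate (line_through P d1) (line_through P d3) (line_through Q d2) (line_through Q d4)"
    unfolding pair_translate_def by blast
qed

section \<open>The rectangle locus\<close>

lemma rectangle_locus_swap_pairs: "rectangle_locus L1 L3 L2 L4 = rectangle_locus L2 L4 L1 L3"
  unfolding rectangle_locus_def
proof (rule Collect_cong)
  fix x
  show "(\<exists>a\<in>L1. \<exists>c\<in>L3. \<exists>b\<in>L2. \<exists>d\<in>L4. midpoint a c = x \<and> midpoint b d = x \<and> dist a c = dist b d)
    \<longleftrightarrow> (\<exists>a\<in>L2. \<exists>c\<in>L4. \<exists>b\<in>L1. \<exists>d\<in>L3. midpoint a c = x \<and> midpoint b d = x \<and> dist a c = dist b d)"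
    by (rule iffI; (elim bexE conjE); (intro bexI conjI); (assumption | rule sym; assumption)?)
qed

lemma rectangle_locus_parallel_not_hyperbola:
  assumes "parallel_lines L1 L3"
  shows "\<not> is_hyperbola (rectangle_locus L1 L3 L2 L4)"
proof
  assume hyp: "is_hyperbola (rectangle_locus L1 L3 L2 L4)"
  obtain p q d where "d \<noteq> 0" and L: "L1 = line_through p d" "L3 = line_through q d"
    using assms unfolding parallel_lines_def by blast
  define w :: "real^2" where "w = vector [- d$2, d$1]"
  have "w \<bullet> d = 0" by (simp add: w_def inner_vec2)
  have "rectangle_locus L1 L3 L2 L4 \<subseteq> {x. w \<bullet> x = w \<bullet> midpoint p q}"
  proof
    fix x
    assume "x \<in> rectangle_locus L1 L3 L2 L4"
    then obtain a c where "a \<in> line_through p d" "c \<in> line_through q d" "x = midpoint a c"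
      unfolding rectangle_locus_def L by blast
    then obtain s t where "x = midpoint (p + s *\<^sub>R d) (q + t *\<^sub>R d)"
      unfolding mem_line_through by blast
    with \<open>w \<bullet> d = 0\<close> show "x \<in> {x. w \<bullet> x = w \<bullet> midpoint p q}"
      by (simp add: midpoint_def inner_add_right)
  qed
  then have "w = 0" using hyperbola_subset_line[OF hyp] by blast
  with \<open>d \<noteq> 0\<close> show False by (simp add: w_def vec2_eq_iff)
qed

lemma midpoint_lincomb_eq_iff:
  "midpoint (P + s *\<^sub>R d) (P + t *\<^sub>R e) = x \<longleftrightarrow> s *\<^sub>R d + t *\<^sub>R e = 2 *\<^sub>R (x - P)"
proof -
  have "2 *\<^sub>R midpoint (P + s *\<^sub>R d) (P + t *\<^sub>R e) = 2 *\<^sub>R P + (s *\<^sub>R d + t *\<^sub>R e)"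
    by (simp add: midpoint_def scaleR_2 add_ac)
  then have "midpoint (P + s *\<^sub>R d) (P + t *\<^sub>R e) = x \<longleftrightarrow> 2 *\<^sub>R P + (s *\<^sub>R d + t *\<^sub>R e) = 2 *\<^sub>R x"
    by (metis scaleR_cancel_left zero_neq_numeral)
  then show ?thesis by (simp add: scaleR_diff_right eq_diff_eq add.commute)
qed

lemma dist_oblique_reflection:
  assumes "cross2 d e \<noteq> 0"
  shows "dist (s *\<^sub>R d) (t *\<^sub>R e) = norm (oblique_reflection d e *v (s *\<^sub>R d + t *\<^sub>R e))"
  by (simp add: dist_norm oblique_reflection_lincomb[OF assms])

lemma diagonal_through_lines_iff:
  assumes "cross2 d e \<noteq> 0"
  shows "(\<exists>a\<in>line_through P d. \<exists>c\<in>line_through P e. midpoint a c = x \<and> dist a c = \<rho>)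
    \<longleftrightarrow> \<rho> = 2 * norm (oblique_reflection d e *v (x - P))"
proof
  assume "\<exists>a\<in>line_through P d. \<exists>c\<in>line_through P e. midpoint a c = x \<and> dist a c = \<rho>"
  then obtain a c where "a \<in> line_through P d" "c \<in> line_through P e"
    and mid: "midpoint a c = x" and dist: "dist a c = \<rho>"
    by blast
  then obtain s t where a: "a = P + s *\<^sub>R d" and c: "c = P + t *\<^sub>R e"
    unfolding mem_line_through by blast
  from mid have "s *\<^sub>R d + t *\<^sub>R e = 2 *\<^sub>R (x - P)"
    by (simp add: midpoint_lincomb_eq_iff a c)
  moreover from dist have "dist (s *\<^sub>R d) (t *\<^sub>R e) = \<rho>"
    by (simp add: a c)
  ultimately show "\<rho> = 2 * norm (oblique_reflection d e *v (x - P))"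
    by (simp add: dist_oblique_reflection[OF assms] matrix_vector_mult_scaleR)
next
  assume \<rho>: "\<rho> = 2 * norm (oblique_reflection d e *v (x - P))"
  obtain s t where st: "2 *\<^sub>R (x - P) = s *\<^sub>R d + t *\<^sub>R e"
    by (rule that[OF cramer2[OF assms]])
  have "midpoint (P + s *\<^sub>R d) (P + t *\<^sub>R e) = x"
    by (simp add: midpoint_lincomb_eq_iff st)
  moreover have "dist (P + s *\<^sub>R d) (P + t *\<^sub>R e) = \<rho>"
    by (simp add: dist_oblique_reflection[OF assms] \<rho> flip: st add: matrix_vector_mult_scaleR)
  moreover have "P + s *\<^sub>R d \<in> line_through P d" "P + t *\<^sub>R e \<in> line_through P e"
    unfolding mem_line_through by blast+
  ultimately show "\<exists>a\<in>line_through P d. \<exists>c\<in>line_through P e. midpoint a c = x \<and> dist a c = \<rho>"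
    by blast
qed

lemma rectangle_locus_concurrent_pairs:
  assumes "cross2 d1 d3 \<noteq> 0" "cross2 d2 d4 \<noteq> 0"
  shows "rectangle_locus (line_through P d1) (line_through P d3) (line_through Q d2) (line_through Q d4)
    = {x. norm (oblique_reflection d1 d3 *v (x - P)) = norm (oblique_reflection d2 d4 *v (x - Q))}"
proof -
  have "x \<in> rectangle_locus (line_through P d1) (line_through P d3) (line_through Q d2) (line_through Q d4)
    \<longleftrightarrow> (\<exists>\<rho>. \<rho> = 2 * norm (oblique_reflection d1 d3 *v (x - P))
          \<and> \<rho> = 2 * norm (oblique_reflection d2 d4 *v (x - Q)))" for x
    unfolding rectangle_locus_def mem_Collect_eq
      diagonal_through_lines_iff[OF assms(1), symmetric] diagonal_through_lines_iff[OF assms(2), symmetric]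
    by metis
  then show ?thesis by auto
qed

theorem theorem4p6:
  fixes L1 L2 L3 L4 :: "(real^2) set"
  assumes "is_line L1" and "is_line L2" and "is_line L3" and "is_line L4"
    and "L1 \<noteq> L3" and "L2 \<noteq> L4"
    and "{L1, L3} \<noteq> {L2, L4}"
  shows "is_hyperbola (rectangle_locus L1 L3 L2 L4) \<longleftrightarrow>
           (\<not> parallel_lines L1 L3 \<and> \<not> parallel_lines L2 L4 \<and>
            \<not> (orthogonal_lines L1 L3 \<and> orthogonal_lines L2 L4) \<and>
            \<not> pair_translate L1 L3 L2 L4)"
proof (cases "parallel_lines L1 L3 \<or> parallel_lines L2 L4")
  case True
  then have "\<not> is_hyperbola (rectangle_locus L1 L3 L2 L4)"
    using rectangle_locus_parallel_not_hyperbola rectangle_locus_swap_pairs by metis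
  with True show ?thesis by blast
next
  case False
  obtain P d1 d3 where k13: "cross2 d1 d3 \<noteq> 0" and L13: "L1 = line_through P d1" "L3 = line_through P d3"
    using nonparallel_lines_through_common_point assms(1,3) False by metis
  obtain Q d2 d4 where k24: "cross2 d2 d4 \<noteq> 0" and L24: "L2 = line_through Q d2" "L4 = line_through Q d4"
    using nonparallel_lines_through_common_point assms(2,4) False by metis
  have k31: "cross2 d3 d1 \<noteq> 0" using k13 by (simp add: cross2_eq_0_commute)
  note nonzero = cross2_nonzero_imp_nonzero[OF k13] cross2_nonzero_imp_nonzero[OF k24]
  define R S where "R = oblique_reflection d1 d3" and "S = oblique_reflection d2 d4"
  have "is_hyperbola (rectangle_locus L1 L3 L2 L4)
      \<longleftrightarrow> \<not> ((transpose R = R \<and> transpose S = S) \<or> S = R \<or> S = - R)"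
    unfolding L13 L24 rectangle_locus_concurrent_pairs[OF k13 k24] R_def S_def
    by (intro reflection_norm_locus_hyperbola_iff is_reflection_oblique_reflection k13 k24)
  moreover have "orthogonal_lines L1 L3 \<and> orthogonal_lines L2 L4 \<longleftrightarrow> transpose R = R \<and> transpose S = S"
    unfolding L13 L24 R_def S_def
    by (simp add: orthogonal_line_through_iff symmetric_oblique_reflection_iff nonzero k13 k24)
  moreover have "pair_translate L1 L3 L2 L4 \<longleftrightarrow> S = R \<or> S = - R"
    unfolding L13 L24 R_def S_def pair_translate_line_through_iff[OF nonzero(1,3,2,4)]
      oblique_reflection_swap[OF k13, symmetric] oblique_reflection_eq_iff[OF k13 k24]
      oblique_reflection_eq_iff[OF k31 k24]
    by blast
  ultimately show ?thesis using False by blast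
qed

end
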